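(* Let $G$ be a bipartite graph with bipartition $\{X,Y\}$, and let $(S,T)$ be a minimum barrier of $G$. Then: (i) $T\subseteq X$; (ii) for each component $C$ of $G-(S\cup T)$ that is not $T$-odd, $\varepsilon_G(T,C)=0$; (iii) for each $T$-odd component $C$ of $G-(S\cup T)$ and each $u\in T$, $\varepsilon_G(u,C)\le 1$; (iv) if $O_1,\dots,O_q$ are the $T$-odd components of $G-(S\cup T)$, where $q=q(S,T)$, then $|T|-|S|>\frac12\sum_{i=1}^{q}\big(\varepsilon_G(T,O_i)-1\big)$.
   Context: For disjoint $A,B\subseteq V(G)$, $\varepsilon_G(A,B)$ is the number of edges with one endpoint in $A$ and the other in $B$; for a subgraph $C$, $\varepsilon_G(A,C)=\varepsilon_G(A,V(C))$, and $\varepsilon_G(u,C)=\varepsilon_G(\{u\},C)$. For $S\subseteq X$ and $T\subseteq X\cup Y$ with $S\cap T=\varnothing$: a component $C$ of $G-(S\cup T)$ is $T$-odd if $\varepsilon_G(T,C)$ is odd; $q(S,T)$ is the number of $T$-odd components; $\delta(S,T)=2|S|+\sum_{v\in T}\deg_{G-S}(v)-2|T\cap X|-q(S,T)$. Such a pair $(S,T)$ is a barrier if $\delta(S,T)<0$; its size is $|S\cup T|$; a minimum barrier is a barrier of smallest possible size. *)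

theory Defs
  imports Complex_Main
begin

definition simple_graph :: "'a set \<Rightarrow> ('a \<Rightarrow> 'a \<Rightarrow> bool) \<Rightarrow> bool" where
  "simple_graph V E \<longleftrightarrow> finite V \<and> (\<forall>u v. E u v \<longrightarrow> E v u) \<and> (\<forall>v. \<not> E v v)
     \<and> (\<forall>u v. E u v \<longrightarrow> u \<in> V \<and> v \<in> V)"

definition bipartite_with :: "'a set \<Rightarrow> ('a \<Rightarrow> 'a \<Rightarrow> bool) \<Rightarrow> 'a set \<Rightarrow> 'a set \<Rightarrow> bool" where
  "bipartite_with V E X Y \<longleftrightarrow> simple_graph V E \<and> X \<union> Y = V \<and> X \<inter> Y = {}
     \<and> (\<forall>u v. E u v \<longrightarrow> (u \<in> X \<and> v \<in> Y) \<or> (u \<in> Y \<and> v \<in> X))"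

definition eps :: "('a \<Rightarrow> 'a \<Rightarrow> bool) \<Rightarrow> 'a set \<Rightarrow> 'a set \<Rightarrow> nat" where
  "eps E A B = card {(a, b). a \<in> A \<and> b \<in> B \<and> E a b}"

definition components :: "('a \<Rightarrow> 'a \<Rightarrow> bool) \<Rightarrow> 'a set \<Rightarrow> 'a set set" where
  "components E W = {{v. (\<lambda>x y. x \<in> W \<and> y \<in> W \<and> E x y)\<^sup>*\<^sup>* u v} | u. u \<in> W}"

definition deg_minus :: "'a set \<Rightarrow> ('a \<Rightarrow> 'a \<Rightarrow> bool) \<Rightarrow> 'a set \<Rightarrow> 'a \<Rightarrow> nat" where
  "deg_minus V E S v = card {w \<in> V - S. E v w}"

definition T_odd :: "('a \<Rightarrow> 'a \<Rightarrow> bool) \<Rightarrow> 'a set \<Rightarrow> 'a set \<Rightarrow> bool" where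
  "T_odd E T C \<longleftrightarrow> odd (eps E T C)"

definition odd_comps :: "'a set \<Rightarrow> ('a \<Rightarrow> 'a \<Rightarrow> bool) \<Rightarrow> 'a set \<Rightarrow> 'a set \<Rightarrow> 'a set set" where
  "odd_comps V E S T = {C \<in> components E (V - (S \<union> T)). T_odd E T C}"

definition qST :: "'a set \<Rightarrow> ('a \<Rightarrow> 'a \<Rightarrow> bool) \<Rightarrow> 'a set \<Rightarrow> 'a set \<Rightarrow> nat" where
  "qST V E S T = card (odd_comps V E S T)"

definition delta :: "'a set \<Rightarrow> ('a \<Rightarrow> 'a \<Rightarrow> bool) \<Rightarrow> 'a set \<Rightarrow> 'a set \<Rightarrow> 'a set \<Rightarrow> int" where
  "delta V E X S T = 2 * int (card S) + int (\<Sum>v\<in>T. deg_minus V E S v)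
      - 2 * int (card (T \<inter> X)) - int (qST V E S T)"

definition barrier :: "'a set \<Rightarrow> ('a \<Rightarrow> 'a \<Rightarrow> bool) \<Rightarrow> 'a set \<Rightarrow> 'a set \<Rightarrow> 'a set \<Rightarrow> 'a set \<Rightarrow> bool" where
  "barrier V E X Y S T \<longleftrightarrow> S \<subseteq> X \<and> T \<subseteq> X \<union> Y \<and> S \<inter> T = {} \<and> delta V E X S T < 0"

definition min_barrier :: "'a set \<Rightarrow> ('a \<Rightarrow> 'a \<Rightarrow> bool) \<Rightarrow> 'a set \<Rightarrow> 'a set \<Rightarrow> 'a set \<Rightarrow> 'a set \<Rightarrow> bool" where
  "min_barrier V E X Y S T \<longleftrightarrow> barrier V E X Y S T \<and>
     (\<forall>S' T'. barrier V E X Y S' T' \<longrightarrow> card (S \<union> T) \<le> card (S' \<union> T'))"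

end

theory Submission
  imports Defs
begin

text \<open>Removing a vertex u from T of a minimum barrier must produce a non-barrier. This changes
  delta by 2[u \<in> X] - deg u plus at most the number of T-odd components adjacent to u, and that
  number is at most deg u because distinct components receive distinct edges from u; hence u \<in> X.
  Once T \<subseteq> X, delta is even (the degrees out of T add up to the edge counts into the
  components, whose parities q records), so the increase is at least 2: every edge leaving u ends
  in its own T-odd component, which gives (ii) and (iii). Summing degrees over T then turns
  delta < 0 into (iv).\<close>

definition component_of :: "('a \<Rightarrow> 'a \<Rightarrow> bool) \<Rightarrow> 'a set \<Rightarrow> 'a \<Rightarrow> 'a set" where
  "component_of E W u = {v. (\<lambda>x y. x \<in> W \<and> y \<in> W \<and> E x y)\<^sup>*\<^sup>* u v}"

lemma components_eq_image: "components E W = component_of E W ` W"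
  unfolding components_def component_of_def by auto

lemma component_of_self: "u \<in> component_of E W u"
  unfolding component_of_def by simp

lemma component_of_subset: "u \<in> W \<Longrightarrow> component_of E W u \<subseteq> W"
proof
  fix v assume "v \<in> component_of E W u" "u \<in> W"
  then have "(\<lambda>x y. x \<in> W \<and> y \<in> W \<and> E x y)\<^sup>*\<^sup>* u v" "u \<in> W"
    unfolding component_of_def by simp_all
  then show "v \<in> W" by (induction rule: rtranclp_induct) auto
qed

lemma component_of_step:
  "y \<in> component_of E W u \<Longrightarrow> y \<in> W \<Longrightarrow> z \<in> W \<Longrightarrow> E y z \<Longrightarrow> z \<in> component_of E W u"
  unfolding component_of_def by (simp add: rtranclp.rtrancl_into_rtrancl)

lemma component_of_eq:
  assumes sym: "symp E" and v: "v \<in> component_of E W u"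
  shows "component_of E W v = component_of E W u"
proof -
  let ?R = "\<lambda>x y. x \<in> W \<and> y \<in> W \<and> E x y"
  have uv: "?R\<^sup>*\<^sup>* u v" using v unfolding component_of_def by simp
  have "symp ?R" using sym unfolding symp_def by blast
  then have "symp ?R\<^sup>*\<^sup>*" by (rule symp_rtranclp)
  then have vu: "?R\<^sup>*\<^sup>* v u" using uv by (rule sympD)
  show ?thesis
    unfolding component_of_def
  proof (intro set_eqI iffI; unfold mem_Collect_eq)
    fix w assume "?R\<^sup>*\<^sup>* v w" then show "?R\<^sup>*\<^sup>* u w" by (rule rtranclp_trans[OF uv])
  next
    fix w assume "?R\<^sup>*\<^sup>* u w" then show "?R\<^sup>*\<^sup>* v w" by (rule rtranclp_trans[OF vu])
  qed
qed

lemma components_subset: "C \<in> components E W \<Longrightarrow> C \<subseteq> W"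
  unfolding components_eq_image using component_of_subset by fast

lemma Union_components: "\<Union>(components E W) = W"
  unfolding components_eq_image using component_of_subset component_of_self by fast

lemma finite_components: "finite W \<Longrightarrow> finite (components E W)"
  unfolding components_eq_image by simp

lemma finite_component: "C \<in> components E W \<Longrightarrow> finite W \<Longrightarrow> finite C"
  using components_subset by (rule finite_subset)

lemma components_disjoint:
  assumes "symp E" "C \<in> components E W" "D \<in> components E W" "w \<in> C" "w \<in> D"
  shows "C = D"
proof -
  obtain x y where "C = component_of E W x" "D = component_of E W y"
    using assms(2,3) unfolding components_eq_image by blast
  then show ?thesis using component_of_eq[OF assms(1)] assms(4,5) by metis
qed

lemma components_superset:
  assumes C: "C \<in> components E W" and "W \<subseteq> W'"
    and no_edge: "\<And>y z. y \<in> C \<Longrightarrow> z \<in> W' - W \<Longrightarrow> \<not> E y z"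
  shows "C \<in> components E W'"
proof -
  obtain x where x: "x \<in> W" "C = component_of E W x"
    using C unfolding components_eq_image by blast
  have "component_of E W' x \<subseteq> C"
  proof
    fix v assume "v \<in> component_of E W' x"
    then have "(\<lambda>a b. a \<in> W' \<and> b \<in> W' \<and> E a b)\<^sup>*\<^sup>* x v" unfolding component_of_def by simp
    then show "v \<in> C"
    proof (induction rule: rtranclp_induct)
      case base then show ?case using x component_of_self by simp
    next
      case (step y z)
      have "E y z" "z \<in> W'" using step.hyps(2) by simp_all
      then have z: "z \<in> W" using no_edge[OF step.IH] by blast
      have y: "y \<in> W" using step.IH component_of_subset[OF x(1)] x(2) by blast
      show ?case using component_of_step[of y E W x z] y z \<open>E y z\<close> step.IH x(2) by simp
    qed
  qed
  moreover have "C \<subseteq> component_of E W' x"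
    unfolding x component_of_def using \<open>W \<subseteq> W'\<close>
    by (auto elim: rtranclp_mono[THEN predicate2D, rotated])
  ultimately show ?thesis
    using x \<open>W \<subseteq> W'\<close> unfolding components_eq_image by blast
qed

lemma eps_singleton: "eps E {a} B = card {b \<in> B. E a b}"
proof -
  have "{(x, b). x \<in> {a} \<and> b \<in> B \<and> E x b} = Pair a ` {b \<in> B. E a b}" by auto
  then show ?thesis unfolding eps_def by (simp add: card_image inj_on_def)
qed

lemma eps_sum_left:
  assumes "finite A" "finite B"
  shows "eps E A B = (\<Sum>a\<in>A. eps E {a} B)"
proof -
  have "{(a, b). a \<in> A \<and> b \<in> B \<and> E a b} = (SIGMA a:A. {b \<in> B. E a b})" by auto
  then have "eps E A B = (\<Sum>a\<in>A. card {b \<in> B. E a b})"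
    unfolding eps_def using assms by simp
  then show ?thesis by (simp add: eps_singleton)
qed

lemma eps_sum_components:
  assumes sym: "symp E" and A: "finite A" and W: "finite W"
  shows "eps E A W = (\<Sum>C\<in>components E W. eps E A C)"
proof -
  let ?edges = "\<lambda>C. {(a, b). a \<in> A \<and> b \<in> C \<and> E a b}"
  have "?edges W = (\<Union>C\<in>components E W. ?edges C)"
    using Union_components[of E W] by auto
  moreover have "card (\<Union>C\<in>components E W. ?edges C) = (\<Sum>C\<in>components E W. card (?edges C))"
  proof (rule card_UN_disjoint)
    show "finite (components E W)" using W by (rule finite_components)
    show "\<forall>C\<in>components E W. finite (?edges C)"
    proof
      fix C assume "C \<in> components E W"
      then have "?edges C \<subseteq> A \<times> W" using components_subset by blast
      then show "finite (?edges C)" by (rule finite_subset[OF _ finite_cartesian_product[OF A W]])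
    qed
    show "\<forall>C\<in>components E W. \<forall>D\<in>components E W. C \<noteq> D \<longrightarrow> ?edges C \<inter> ?edges D = {}"
    proof (intro ballI impI equals0I)
      fix C D p assume C: "C \<in> components E W" and D: "D \<in> components E W" and "C \<noteq> D"
        and "p \<in> ?edges C \<inter> ?edges D"
      then have "snd p \<in> C" "snd p \<in> D" by auto
      with \<open>C \<noteq> D\<close> show False using components_disjoint[OF sym C D] by blast
    qed
  qed
  ultimately show ?thesis unfolding eps_def by (simp only:)
qed

lemma even_sum_plus_card_odd: "finite A \<Longrightarrow> even ((\<Sum>x\<in>A. f x :: nat) + card {x \<in> A. odd (f x)})"
proof (induction A rule: finite_induct)
  case (insert x F)
  have "{y \<in> insert x F. odd (f y)} = (if odd (f x) then insert x {y \<in> F. odd (f y)} else {y \<in> F. odd (f y)})"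
    by auto
  then show ?case using insert by auto
qed simp

lemma simple_graph_symp: "simple_graph V E \<Longrightarrow> symp E"
  unfolding simple_graph_def symp_def by blast

lemma bipartite_with_simple_graph: "bipartite_with V E X Y \<Longrightarrow> simple_graph V E"
  unfolding bipartite_with_def by blast

lemma bipartite_with_finite: "bipartite_with V E X Y \<Longrightarrow> finite V"
  unfolding bipartite_with_def simple_graph_def by blast

lemma finite_odd_comps: "finite V \<Longrightarrow> finite (odd_comps V E S T)"
  unfolding odd_comps_def using finite_components[of "V - (S \<union> T)" E] by auto

lemma deg_minus_eq_sum_eps_components:
  assumes bip: "bipartite_with V E X Y" and "T \<subseteq> X" "v \<in> T"
  shows "deg_minus V E S v = (\<Sum>C\<in>components E (V - (S \<union> T)). eps E {v} C)"
proof -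
  have "{w \<in> V - S. E v w} = {w \<in> V - (S \<union> T). E v w}"
    using bip assms(2,3) unfolding bipartite_with_def by blast
  then have "deg_minus V E S v = eps E {v} (V - (S \<union> T))"
    unfolding deg_minus_def eps_singleton by simp
  also have "\<dots> = (\<Sum>C\<in>components E (V - (S \<union> T)). eps E {v} C)"
    using eps_sum_components[OF simple_graph_symp[OF bipartite_with_simple_graph[OF bip]]]
      bipartite_with_finite[OF bip] by simp
  finally show ?thesis .
qed

lemma sum_deg_minus_eq_sum_eps_components:
  assumes bip: "bipartite_with V E X Y" and "T \<subseteq> X"
  shows "(\<Sum>v\<in>T. deg_minus V E S v) = (\<Sum>C\<in>components E (V - (S \<union> T)). eps E T C)"
proof -
  have finV: "finite V" using bip by (rule bipartite_with_finite)
  have "T \<subseteq> V" using bip \<open>T \<subseteq> X\<close> unfolding bipartite_with_def by blast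
  then have finT: "finite T" using finV by (rule finite_subset)
  have "(\<Sum>v\<in>T. deg_minus V E S v) = (\<Sum>v\<in>T. \<Sum>C\<in>components E (V - (S \<union> T)). eps E {v} C)"
    using deg_minus_eq_sum_eps_components[OF assms] by simp
  also have "\<dots> = (\<Sum>C\<in>components E (V - (S \<union> T)). \<Sum>v\<in>T. eps E {v} C)"
    by (rule sum.swap)
  also have "\<dots> = (\<Sum>C\<in>components E (V - (S \<union> T)). eps E T C)"
  proof (rule sum.cong[OF refl])
    fix C assume C: "C \<in> components E (V - (S \<union> T))"
    have "finite C" using finV by (intro finite_component[OF C]) simp
    then show "(\<Sum>v\<in>T. eps E {v} C) = eps E T C" by (rule eps_sum_left[OF finT, symmetric])
  qed
  finally show ?thesis .
qed

lemma delta_even: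
  assumes bip: "bipartite_with V E X Y" and "T \<subseteq> X"
  shows "even (delta V E X S T)"
proof -
  let ?comps = "components E (V - (S \<union> T))"
  have "qST V E S T = card {C \<in> ?comps. odd (eps E T C)}"
    unfolding qST_def odd_comps_def T_odd_def ..
  moreover have "even ((\<Sum>C\<in>?comps. eps E T C) + card {C \<in> ?comps. odd (eps E T C)})"
    using bipartite_with_finite[OF bip] by (intro even_sum_plus_card_odd finite_components) simp
  ultimately have "even ((\<Sum>v\<in>T. deg_minus V E S v) + qST V E S T)"
    using sum_deg_minus_eq_sum_eps_components[OF assms] by simp
  then show ?thesis unfolding delta_def by (simp add: even_add del: of_nat_sum)
qed

lemma qST_le_qST_remove:
  assumes "finite V" and sym: "symp E"
  shows "qST V E S T \<le> qST V E S (T - {u}) + card {C \<in> odd_comps V E S T. \<exists>w\<in>C. E u w}"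
proof -
  let ?O = "odd_comps V E S T" and ?A = "{C \<in> odd_comps V E S T. \<exists>w\<in>C. E u w}"
  have "?O - ?A \<subseteq> odd_comps V E S (T - {u})"
  proof
    fix C assume "C \<in> ?O - ?A"
    then have C: "C \<in> components E (V - (S \<union> T))" and odd: "odd (eps E T C)" and
      no_edge: "\<forall>w\<in>C. \<not> E u w"
      unfolding odd_comps_def T_odd_def by auto
    have "\<not> E w u" if "w \<in> C" for w
      using no_edge that sympD[OF sym, of w u] by blast
    then have "C \<in> components E (V - (S \<union> (T - {u})))"
      by (intro components_superset[OF C]) auto
    moreover have "eps E (T - {u}) C = eps E T C"
      unfolding eps_def using no_edge by (intro arg_cong[where f = card]) auto
    ultimately show "C \<in> odd_comps V E S (T - {u})"
      using odd unfolding odd_comps_def T_odd_def by simp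
  qed
  moreover have "finite (odd_comps V E S (T - {u}))"
    using \<open>finite V\<close> by (rule finite_odd_comps)
  ultimately have "card (?O - ?A) \<le> qST V E S (T - {u})"
    unfolding qST_def by (rule card_mono[rotated])
  moreover have "card ?O \<le> card (?O - ?A) + card ?A"
    using card_Un_le[of "?O - ?A" ?A] by (simp add: Un_absorb2)
  ultimately show ?thesis unfolding qST_def by linarith
qed

lemma delta_remove_le:
  assumes "finite V" "symp E" "finite T" "u \<in> T"
  shows "delta V E X S (T - {u}) \<le> delta V E X S T - int (deg_minus V E S u)
           + (if u \<in> X then 2 else 0) + int (card {C \<in> odd_comps V E S T. \<exists>w\<in>C. E u w})"
proof -
  have "(\<Sum>v\<in>T. deg_minus V E S v) = deg_minus V E S u + (\<Sum>v\<in>T - {u}. deg_minus V E S v)"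
    using assms(3,4) by (rule sum.remove)
  moreover have "card (T \<inter> X) = card ((T - {u}) \<inter> X) + (if u \<in> X then 1 else 0)"
  proof (cases "u \<in> X")
    case True
    then have "T \<inter> X = insert u ((T - {u}) \<inter> X)" using \<open>u \<in> T\<close> by blast
    then show ?thesis using True \<open>finite T\<close> by simp
  next
    case False
    then have "T \<inter> X = (T - {u}) \<inter> X" by blast
    then show ?thesis using False by simp
  qed
  moreover note qST_le_qST_remove[OF assms(1,2), of S T u]
  ultimately show ?thesis unfolding delta_def by (cases "u \<in> X") simp_all
qed

lemma card_adjacent_odd_comps:
  assumes "finite V"
  shows "card {C \<in> odd_comps V E S T. \<exists>w\<in>C. E u w}
    = (\<Sum>C\<in>components E (V - (S \<union> T)). of_bool (T_odd E T C \<and> (\<exists>w\<in>C. E u w)))"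
  using assms finite_components[of "V - (S \<union> T)" E]
  by (simp add: odd_comps_def Int_def conj_ac)

lemma of_bool_adjacent_le_eps: "finite C \<Longrightarrow> of_bool (P \<and> (\<exists>w\<in>C. E u w)) \<le> eps E {u} C"
  by (auto simp: eps_singleton Suc_le_eq card_gt_0_iff)

lemma card_adjacent_odd_comps_le_deg_minus:
  assumes "finite V" "symp E"
  shows "card {C \<in> odd_comps V E S T. \<exists>w\<in>C. E u w} \<le> deg_minus V E S u"
proof -
  let ?comps = "components E (V - (S \<union> T))"
  have "card {C \<in> odd_comps V E S T. \<exists>w\<in>C. E u w}
      = (\<Sum>C\<in>?comps. of_bool (T_odd E T C \<and> (\<exists>w\<in>C. E u w)))"
    using assms(1) by (rule card_adjacent_odd_comps)
  also have "\<dots> \<le> (\<Sum>C\<in>?comps. eps E {u} C)"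
  proof (rule sum_mono)
    fix C assume "C \<in> ?comps"
    have "finite C" using assms(1) by (intro finite_component[OF \<open>C \<in> ?comps\<close>]) simp
    then show "of_bool (T_odd E T C \<and> (\<exists>w\<in>C. E u w)) \<le> eps E {u} C"
      by (rule of_bool_adjacent_le_eps)
  qed
  also have "\<dots> = eps E {u} (V - (S \<union> T))"
    using assms by (simp add: eps_sum_components)
  also have "\<dots> \<le> deg_minus V E S u"
    unfolding eps_singleton deg_minus_def using assms(1) by (intro card_mono) auto
  finally show ?thesis .
qed

lemma min_barrier_delta_remove_nonneg:
  assumes min: "min_barrier V E X Y S T" and "finite (S \<union> T)" "u \<in> T"
  shows "0 \<le> delta V E X S (T - {u})"
proof (rule ccontr)
  assume "\<not> 0 \<le> delta V E X S (T - {u})"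
  then have "barrier V E X Y S (T - {u})"
    using min unfolding min_barrier_def barrier_def by auto
  then have "card (S \<union> T) \<le> card (S \<union> (T - {u}))"
    using min unfolding min_barrier_def by blast
  moreover have "S \<union> (T - {u}) = (S \<union> T) - {u}"
    using min \<open>u \<in> T\<close> unfolding min_barrier_def barrier_def by blast
  ultimately show False
    using card_Diff1_less[OF \<open>finite (S \<union> T)\<close>, of u] \<open>u \<in> T\<close> by simp
qed

locale bipartite_min_barrier =
  fixes V :: "'a set" and E :: "'a \<Rightarrow> 'a \<Rightarrow> bool" and X Y S T :: "'a set"
  assumes bipartite: "bipartite_with V E X Y"
    and min_barrier: "min_barrier V E X Y S T"
begin

lemma finite_V: "finite V"
  using bipartite by (rule bipartite_with_finite)

lemma symp_E: "symp E"
  using bipartite by (intro simple_graph_symp bipartite_with_simple_graph)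

lemma finite_S_T: "finite (S \<union> T)"
proof -
  have "S \<union> T \<subseteq> V"
    using min_barrier bipartite unfolding min_barrier_def barrier_def bipartite_with_def by blast
  then show ?thesis using finite_V by (rule finite_subset)
qed

lemma finite_T: "finite T"
  using finite_S_T by simp

lemma delta_neg: "delta V E X S T < 0"
  using min_barrier unfolding min_barrier_def barrier_def by blast

lemma T_subset_X: "T \<subseteq> X"
proof
  fix u assume "u \<in> T"
  show "u \<in> X"
  proof (rule ccontr)
    assume "u \<notin> X"
    then have "delta V E X S (T - {u}) \<le> delta V E X S T"
      using delta_remove_le[OF finite_V symp_E finite_T \<open>u \<in> T\<close>, where X = X and S = S]
        card_adjacent_odd_comps_le_deg_minus[OF finite_V symp_E, of S T u] by simp
    then show False
      using min_barrier_delta_remove_nonneg[OF min_barrier finite_S_T \<open>u \<in> T\<close>] delta_neg by simp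
  qed
qed

lemma deg_minus_le_card_adjacent_odd_comps:
  assumes "u \<in> T"
  shows "deg_minus V E S u \<le> card {C \<in> odd_comps V E S T. \<exists>w\<in>C. E u w}"
proof (rule ccontr)
  assume "\<not> ?thesis"
  moreover have "u \<in> X" using T_subset_X assms by blast
  ultimately have "delta V E X S (T - {u}) \<le> delta V E X S T + 1"
    using delta_remove_le[OF finite_V symp_E finite_T assms, where X = X and S = S] by simp
  moreover have "even (delta V E X S (T - {u}))"
    using T_subset_X by (intro delta_even[OF bipartite]) blast
  moreover have "even (delta V E X S T)"
    using bipartite T_subset_X by (rule delta_even)
  ultimately have "delta V E X S (T - {u}) \<le> delta V E X S T" by presburger
  then show False
    using min_barrier_delta_remove_nonneg[OF min_barrier finite_S_T assms] delta_neg by simp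
qed

lemma eps_singleton_le_T_odd:
  assumes "u \<in> T" and C: "C \<in> components E (V - (S \<union> T))"
  shows "eps E {u} C \<le> of_bool (T_odd E T C)"
proof -
  let ?comps = "components E (V - (S \<union> T))"
  let ?g = "\<lambda>C. of_bool (T_odd E T C \<and> (\<exists>w\<in>C. E u w)) :: nat"
  have fin: "finite ?comps" using finite_V by (simp add: finite_components)
  have le: "?g D \<le> eps E {u} D" if "D \<in> ?comps" for D
    using finite_V by (intro of_bool_adjacent_le_eps finite_component[OF that]) simp
  have "(\<Sum>D\<in>?comps. eps E {u} D) = deg_minus V E S u"
    using deg_minus_eq_sum_eps_components[OF bipartite T_subset_X assms(1)] ..
  also have "\<dots> \<le> card {D \<in> odd_comps V E S T. \<exists>w\<in>D. E u w}"
    using assms(1) by (rule deg_minus_le_card_adjacent_odd_comps)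
  also have "\<dots> = (\<Sum>D\<in>?comps. ?g D)"
    using finite_V by (rule card_adjacent_odd_comps)
  finally have "(\<Sum>D\<in>?comps. ?g D) = (\<Sum>D\<in>?comps. eps E {u} D)"
    using sum_mono[of ?comps ?g, OF le] by linarith
  then have "?g C = eps E {u} C" using le C fin by (rule sum_mono_inv)
  then have "eps E {u} C = ?g C" ..
  also have "\<dots> \<le> of_bool (T_odd E T C)" by simp
  finally show ?thesis .
qed

lemma eps_eq_0_if_not_T_odd:
  assumes C: "C \<in> components E (V - (S \<union> T))" and "\<not> T_odd E T C"
  shows "eps E T C = 0"
proof -
  have "finite C" using finite_V by (intro finite_component[OF C]) simp
  with finite_T have "eps E T C = (\<Sum>u\<in>T. eps E {u} C)" by (rule eps_sum_left)
  also have "\<dots> = 0"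
  proof (rule sum.neutral, rule ballI)
    fix u assume "u \<in> T"
    show "eps E {u} C = 0"
      using eps_singleton_le_T_odd[OF \<open>u \<in> T\<close> C] \<open>\<not> T_odd E T C\<close> by simp
  qed
  finally show ?thesis .
qed

lemma sum_eps_odd_comps_lt:
  "2 * card S + (\<Sum>D\<in>odd_comps V E S T. eps E T D) < 2 * card T + qST V E S T"
proof -
  let ?comps = "components E (V - (S \<union> T))"
  have "(\<Sum>v\<in>T. deg_minus V E S v) = (\<Sum>C\<in>?comps. eps E T C)"
    using bipartite T_subset_X by (rule sum_deg_minus_eq_sum_eps_components)
  also have "\<dots> = (\<Sum>D\<in>odd_comps V E S T. eps E T D)"
    using finite_V eps_eq_0_if_not_T_odd
    by (intro sum.mono_neutral_right finite_components) (auto simp: odd_comps_def)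
  finally have "(\<Sum>v\<in>T. deg_minus V E S v) = (\<Sum>D\<in>odd_comps V E S T. eps E T D)" .
  moreover have "T \<inter> X = T" using T_subset_X by blast
  ultimately show ?thesis using delta_neg unfolding delta_def by (simp del: of_nat_sum; linarith)
qed

end

theorem lemma2p3:
  fixes V :: "'a set" and E :: "'a \<Rightarrow> 'a \<Rightarrow> bool" and X Y S T :: "'a set"
  assumes "bipartite_with V E X Y"
    and "min_barrier V E X Y S T"
  shows "T \<subseteq> X
    \<and> (\<forall>C \<in> components E (V - (S \<union> T)). \<not> T_odd E T C \<longrightarrow> eps E T C = 0)
    \<and> (\<forall>C \<in> components E (V - (S \<union> T)). T_odd E T C \<longrightarrow> (\<forall>u \<in> T. eps E {u} C \<le> 1))
    \<and> real (card T) - real (card S)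
           > (1/2) * (\<Sum>D \<in> odd_comps V E S T. (real (eps E T D) - 1))"
proof -
  interpret bipartite_min_barrier V E X Y S T
    using assms by unfold_locales
  let ?O = "odd_comps V E S T"
  have "real (2 * card S + (\<Sum>D\<in>?O. eps E T D)) < real (2 * card T + card ?O)"
    using sum_eps_odd_comps_lt unfolding qST_def of_nat_less_iff .
  moreover have "(\<Sum>D\<in>?O. real (eps E T D) - 1) = (\<Sum>D\<in>?O. real (eps E T D)) - real (card ?O)"
    by (simp add: sum_subtractf)
  ultimately have iv: "(1/2) * (\<Sum>D\<in>?O. real (eps E T D) - 1) < real (card T) - real (card S)"
    by simp
  have ii: "\<forall>C \<in> components E (V - (S \<union> T)). \<not> T_odd E T C \<longrightarrow> eps E T C = 0"
    using eps_eq_0_if_not_T_odd by blast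
  have iii: "\<forall>C \<in> components E (V - (S \<union> T)). T_odd E T C \<longrightarrow> (\<forall>u \<in> T. eps E {u} C \<le> 1)"
  proof (intro ballI impI)
    fix C u assume "C \<in> components E (V - (S \<union> T))" "T_odd E T C" "u \<in> T"
    then show "eps E {u} C \<le> 1" using eps_singleton_le_T_odd[of u C] by simp
  qed
  show ?thesis using T_subset_X ii iii iv by (intro conjI)
qed

end
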